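(* Let $G$ be a finite group with identity $e$ and let $S\subseteq G\setminus\{e\}$ with $|S|=k\le 4$, such that some ordering of the elements of $S$ has product different from $e$. Suppose $S$ is not of either of the following forms: (i) $|S|=4$ and $S=\{x,x^{-1},y,z\}$ for elements with $xyz=x^{-1}zy=e$; (ii) $|S|=4$ and $S=\{w,x,y,z\}$ for elements with $wxy=wyz=wzx=xzy=e$. Then there is an ordering of the elements of $S$ whose partial products are pairwise distinct, i.e. $G$ has an $S$-sequencing.
   Context: For a group $G$ with identity $e$ and a set $S\subseteq G\setminus\{e\}$ with $|S|=k$, an $S$-sequencing of $G$ is an ordering $(g_1,\dots,g_k)$ of the elements of $S$ (each used exactly once) such that the partial products $h_0=e$, $h_i=g_1g_2\cdots g_i$ ($1\le i\le k$) are pairwise distinct. *)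

theory Defs
  imports "HOL-Algebra.Group"
begin

definition list_prod :: "('a, 'b) monoid_scheme \<Rightarrow> 'a list \<Rightarrow> 'a" where
  "list_prod G gs = foldl (\<lambda>a b. a \<otimes>\<^bsub>G\<^esub> b) \<one>\<^bsub>G\<^esub> gs"

definition is_ordering :: "'a set \<Rightarrow> 'a list \<Rightarrow> bool" where
  "is_ordering S gs \<longleftrightarrow> distinct gs \<and> set gs = S"

definition is_S_sequencing :: "('a, 'b) monoid_scheme \<Rightarrow> 'a set \<Rightarrow> 'a list \<Rightarrow> bool" where
  "is_S_sequencing G S gs \<longleftrightarrow> is_ordering S gs \<and>
     inj_on (\<lambda>i. list_prod G (take i gs)) {0..length gs}"

end

theory Submission
  imports Defs
begin

text \<open>Since h_j = h_i g_(i+1) ... g_j, an ordering of S is a sequencing exactly when no block of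
  consecutive entries multiplies to e. Rotating an ordering conjugates its product, so every rotation
  still has product different from e, and for k \<le> 4 only blocks of length 2 and 3 remain to be
  controlled. If two cyclically adjacent elements are mutually inverse, or two overlapping triples
  multiply to e, a short case analysis on further products either yields a suitable reordering or
  forces one of the two exceptional configurations.\<close>

context monoid
begin

lemma list_prod_closed: "set gs \<subseteq> carrier G \<Longrightarrow> list_prod G gs \<in> carrier G"
  by (induction gs rule: rev_induct) (auto simp: list_prod_def)

lemma list_prod_append:
  assumes "set xs \<subseteq> carrier G" "set ys \<subseteq> carrier G"
  shows "list_prod G (xs @ ys) = list_prod G xs \<otimes> list_prod G ys"
  using assms(2)
proof (induction ys rule: rev_induct)
  case Nil
  then show ?case using list_prod_closed[OF assms(1)] by (simp add: list_prod_def)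
next
  case (snoc y ys)
  then show ?case using list_prod_closed[of xs] list_prod_closed[of ys] assms(1)
    by (simp add: list_prod_def m_assoc)
qed

end

context group
begin

lemma m_eq_one_iff_right_eq_inv:
  "x \<in> carrier G \<Longrightarrow> y \<in> carrier G \<Longrightarrow> x \<otimes> y = \<one> \<longleftrightarrow> y = inv x"
  using inv_comm inv_equality by fastforce

lemma m_eq_one_iff_left_eq_inv:
  "x \<in> carrier G \<Longrightarrow> y \<in> carrier G \<Longrightarrow> x \<otimes> y = \<one> \<longleftrightarrow> x = inv y"
  using inv_equality by fastforce

lemma m_eq_one_commute:
  "x \<in> carrier G \<Longrightarrow> y \<in> carrier G \<Longrightarrow> x \<otimes> y = \<one> \<longleftrightarrow> y \<otimes> x = \<one>"
  using inv_comm by blast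

lemma rotate3_eq_one:
  "x \<in> carrier G \<Longrightarrow> y \<in> carrier G \<Longrightarrow> z \<in> carrier G \<Longrightarrow>
    x \<otimes> y \<otimes> z = \<one> \<longleftrightarrow> y \<otimes> z \<otimes> x = \<one>"
  using m_eq_one_commute[of x "y \<otimes> z"] by (simp add: m_assoc)

lemma rotate4_eq_one:
  "x \<in> carrier G \<Longrightarrow> y \<in> carrier G \<Longrightarrow> z \<in> carrier G \<Longrightarrow> w \<in> carrier G \<Longrightarrow>
    x \<otimes> y \<otimes> z \<otimes> w = \<one> \<longleftrightarrow> y \<otimes> z \<otimes> w \<otimes> x = \<one>"
  using m_eq_one_commute[of x "y \<otimes> z \<otimes> w"] by (simp add: m_assoc)

lemma conj_eq_one_iff:
  "x \<in> carrier G \<Longrightarrow> y \<in> carrier G \<Longrightarrow> x \<otimes> y \<otimes> inv x = \<one> \<longleftrightarrow> y = \<one>"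
  by (simp add: m_eq_one_iff_left_eq_inv)

lemma list_prod_take_eq_iff_block:
  assumes "set gs \<subseteq> carrier G" "i \<le> j"
  shows "list_prod G (take i gs) = list_prod G (take j gs) \<longleftrightarrow> list_prod G (drop i (take j gs)) = \<one>"
proof -
  have "take j gs = take i gs @ drop i (take j gs)"
    using assms(2) by (metis append_take_drop_id min.absorb1 take_take)
  moreover have "set (take i gs) \<subseteq> carrier G" "set (drop i (take j gs)) \<subseteq> carrier G"
    using assms(1) by (auto dest: in_set_takeD in_set_dropD)
  ultimately have "list_prod G (take j gs) = list_prod G (take i gs) \<otimes> list_prod G (drop i (take j gs))"
    by (metis list_prod_append)
  then show ?thesis
    using list_prod_closed \<open>set (take i gs) \<subseteq> carrier G\<close> \<open>set (drop i (take j gs)) \<subseteq> carrier G\<close>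
    by simp
qed

lemma is_S_sequencing_iff:
  assumes "set gs \<subseteq> carrier G"
  shows "is_S_sequencing G S gs \<longleftrightarrow>
    is_ordering S gs \<and> (\<forall>j \<le> length gs. \<forall>i < j. list_prod G (drop i (take j gs)) \<noteq> \<one>)"
proof -
  have "inj_on (\<lambda>i. list_prod G (take i gs)) {0..length gs} \<longleftrightarrow>
      (\<forall>j \<le> length gs. \<forall>i < j. list_prod G (take i gs) \<noteq> list_prod G (take j gs))"
  proof
    assume "inj_on (\<lambda>i. list_prod G (take i gs)) {0..length gs}"
    then show "\<forall>j \<le> length gs. \<forall>i < j. list_prod G (take i gs) \<noteq> list_prod G (take j gs)"
      by (auto dest: inj_onD)
  next
    assume "\<forall>j \<le> length gs. \<forall>i < j. list_prod G (take i gs) \<noteq> list_prod G (take j gs)"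
    then show "inj_on (\<lambda>i. list_prod G (take i gs)) {0..length gs}"
      by (intro linorder_inj_onI') (metis atLeastAtMost_iff)
  qed
  then show ?thesis
    using list_prod_take_eq_iff_block[OF assms] unfolding is_S_sequencing_def by auto
qed

lemma ex_S_sequencing1I:
  assumes "{p} = S" "p \<in> carrier G" "p \<noteq> \<one>"
  shows "\<exists>gs. is_S_sequencing G S gs"
proof
  show "is_S_sequencing G S [p]"
    using assms(2-) unfolding assms(1)[symmetric]
    by (subst is_S_sequencing_iff) (simp_all add: is_ordering_def list_prod_def All_less_Suc le_Suc_eq)
qed

lemma ex_S_sequencing2I:
  assumes "{p, q} = S" "distinct [p, q]"
    and "p \<in> carrier G" "q \<in> carrier G" "p \<noteq> \<one>" "q \<noteq> \<one>" "p \<otimes> q \<noteq> \<one>"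
  shows "\<exists>gs. is_S_sequencing G S gs"
proof
  show "is_S_sequencing G S [p, q]"
    using assms(2-) unfolding assms(1)[symmetric]
    by (subst is_S_sequencing_iff)
      (simp_all add: is_ordering_def list_prod_def numeral_eq_Suc All_less_Suc le_Suc_eq all_conj_distrib)
qed

lemma ex_S_sequencing3I:
  assumes "{p, q, r} = S" "distinct [p, q, r]"
    and "p \<in> carrier G" "q \<in> carrier G" "r \<in> carrier G" "p \<noteq> \<one>" "q \<noteq> \<one>" "r \<noteq> \<one>"
    and "p \<otimes> q \<noteq> \<one>" "q \<otimes> r \<noteq> \<one>" "p \<otimes> q \<otimes> r \<noteq> \<one>"
  shows "\<exists>gs. is_S_sequencing G S gs"
proof
  show "is_S_sequencing G S [p, q, r]"
    using assms(2-) unfolding assms(1)[symmetric]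
    by (subst is_S_sequencing_iff)
      (simp_all add: is_ordering_def list_prod_def numeral_eq_Suc All_less_Suc le_Suc_eq all_conj_distrib m_assoc)
qed

lemma ex_S_sequencing4I:
  assumes "{p, q, r, s} = S" "distinct [p, q, r, s]"
    and "p \<in> carrier G" "q \<in> carrier G" "r \<in> carrier G" "s \<in> carrier G"
    and "p \<noteq> \<one>" "q \<noteq> \<one>" "r \<noteq> \<one>" "s \<noteq> \<one>"
    and "p \<otimes> q \<noteq> \<one>" "q \<otimes> r \<noteq> \<one>" "r \<otimes> s \<noteq> \<one>"
    and "p \<otimes> q \<otimes> r \<noteq> \<one>" "q \<otimes> r \<otimes> s \<noteq> \<one>" "p \<otimes> q \<otimes> r \<otimes> s \<noteq> \<one>"
  shows "\<exists>gs. is_S_sequencing G S gs"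
proof
  show "is_S_sequencing G S [p, q, r, s]"
    using assms(2-) unfolding assms(1)[symmetric]
    by (subst is_S_sequencing_iff) (simp_all add: is_ordering_def list_prod_def numeral_eq_Suc All_less_Suc
        le_Suc_eq all_conj_distrib m_assoc)
qed

lemma ex_S_sequencing3:
  assumes "p \<in> carrier G" "q \<in> carrier G" "r \<in> carrier G"
    and "p \<noteq> \<one>" "q \<noteq> \<one>" "r \<noteq> \<one>" "distinct [p, q, r]"
    and "p \<otimes> q \<otimes> r \<noteq> \<one>"
  shows "\<exists>gs. is_S_sequencing G {p, q, r} gs"
proof -
  consider "p \<otimes> q \<noteq> \<one>" "q \<otimes> r \<noteq> \<one>" | "p \<otimes> q = \<one>" | "p \<otimes> q \<noteq> \<one>" "q \<otimes> r = \<one>"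
    by blast
  then show ?thesis
  proof cases
    case 1
    then show ?thesis
      by (intro ex_S_sequencing3I) (use assms in auto)
  next
    case 2
    then have "q = inv p"
      by (simp add: assms m_eq_one_iff_right_eq_inv)
    then show ?thesis
      by (intro ex_S_sequencing3I[of q r p])
        (use assms rotate3_eq_one[of p q r] in \<open>auto simp: m_eq_one_iff_right_eq_inv m_eq_one_iff_left_eq_inv\<close>)
  next
    case 3
    then have "r = inv q"
      by (simp add: assms m_eq_one_iff_right_eq_inv)
    with 3 show ?thesis
      by (intro ex_S_sequencing3I[of r p q])
        (use assms rotate3_eq_one[of r p q] rotate3_eq_one[of p q r] in \<open>auto simp: m_eq_one_iff_right_eq_inv\<close>)
  qed
qed

end

definition inverse_pair_exception :: "('a, 'b) monoid_scheme \<Rightarrow> 'a set \<Rightarrow> bool" where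
  "inverse_pair_exception G S \<longleftrightarrow> (\<exists>x\<in>carrier G. \<exists>y\<in>carrier G. \<exists>z\<in>carrier G.
     S = {x, inv\<^bsub>G\<^esub> x, y, z} \<and> x \<otimes>\<^bsub>G\<^esub> y \<otimes>\<^bsub>G\<^esub> z = \<one>\<^bsub>G\<^esub> \<and> inv\<^bsub>G\<^esub> x \<otimes>\<^bsub>G\<^esub> z \<otimes>\<^bsub>G\<^esub> y = \<one>\<^bsub>G\<^esub>)"

definition four_triples_exception :: "('a, 'b) monoid_scheme \<Rightarrow> 'a set \<Rightarrow> bool" where
  "four_triples_exception G S \<longleftrightarrow> (\<exists>w\<in>carrier G. \<exists>x\<in>carrier G. \<exists>y\<in>carrier G. \<exists>z\<in>carrier G.
     S = {w, x, y, z} \<and> w \<otimes>\<^bsub>G\<^esub> x \<otimes>\<^bsub>G\<^esub> y = \<one>\<^bsub>G\<^esub> \<and> w \<otimes>\<^bsub>G\<^esub> y \<otimes>\<^bsub>G\<^esub> z = \<one>\<^bsub>G\<^esub>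
     \<and> w \<otimes>\<^bsub>G\<^esub> z \<otimes>\<^bsub>G\<^esub> x = \<one>\<^bsub>G\<^esub> \<and> x \<otimes>\<^bsub>G\<^esub> z \<otimes>\<^bsub>G\<^esub> y = \<one>\<^bsub>G\<^esub>)"

context group
begin

lemma sequencing4_or_exception_inverse_adjacent_prod_eq:
  assumes carrier: "a \<in> carrier G" "c \<in> carrier G" "d \<in> carrier G"
    and nontrivial: "a \<noteq> \<one>" "c \<noteq> \<one>" "d \<noteq> \<one>" and distinct: "distinct [a, b, c, d]"
    and b: "b = inv a" and cd: "c \<otimes> d = a"
  shows "(\<exists>gs. is_S_sequencing G {a, b, c, d} gs) \<or> inverse_pair_exception G {a, b, c, d}"
proof (cases "a \<otimes> d \<otimes> c = \<one>")
  case True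
  have "inv a \<otimes> c \<otimes> d = \<one>"
    using carrier cd by (simp add: m_assoc)
  with True have "inverse_pair_exception G {a, b, c, d}"
    unfolding inverse_pair_exception_def using carrier b
    by (intro bexI[of _ a] bexI[of _ d] bexI[of _ c]) auto
  then show ?thesis ..
next
  case False
  have "c \<otimes> a \<noteq> \<one>"
    using carrier distinct b by (auto simp: m_eq_one_iff_left_eq_inv)
  moreover have "a \<otimes> d \<noteq> \<one>"
    using carrier distinct b by (auto simp: m_eq_one_iff_right_eq_inv)
  moreover have "d \<otimes> b \<noteq> \<one>"
    using carrier distinct b by (auto simp: m_eq_one_iff_left_eq_inv)
  moreover have "c \<otimes> a \<otimes> d \<noteq> \<one>"
    using False carrier rotate3_eq_one[of c a d] rotate3_eq_one[of a d c] by simp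
  moreover have "a \<otimes> d \<otimes> b \<noteq> \<one>"
    using carrier nontrivial b conj_eq_one_iff by simp
  moreover have "c \<otimes> a \<otimes> d \<otimes> b \<noteq> \<one>"
  proof -
    have "d = inv c \<otimes> a"
      using carrier cd inv_solve_left by blast
    then have "c \<otimes> a \<otimes> d \<otimes> b = c \<otimes> a \<otimes> inv c"
      using carrier b by (simp add: m_assoc)
    then show ?thesis
      using carrier nontrivial conj_eq_one_iff by simp
  qed
  ultimately have "\<exists>gs. is_S_sequencing G {a, b, c, d} gs"
    using carrier nontrivial distinct b by (intro ex_S_sequencing4I[of c a d b]) auto
  then show ?thesis ..
qed

lemma sequencing4_or_exception_inverse_adjacent:
  assumes carrier: "a \<in> carrier G" "c \<in> carrier G" "d \<in> carrier G"
    and nontrivial: "a \<noteq> \<one>" "c \<noteq> \<one>" "d \<noteq> \<one>" and distinct: "distinct [a, b, c, d]"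
    and b: "b = inv a" and prod: "a \<otimes> b \<otimes> c \<otimes> d \<noteq> \<one>"
  shows "(\<exists>gs. is_S_sequencing G {a, b, c, d} gs) \<or> inverse_pair_exception G {a, b, c, d}"
proof -
  consider "c \<otimes> d = a" | "c \<otimes> d = b" | "c \<otimes> d \<noteq> a" "c \<otimes> d \<noteq> b" by blast
  then show ?thesis
  proof cases
    case 1
    then show ?thesis
      using sequencing4_or_exception_inverse_adjacent_prod_eq assms by blast
  next
    case 2
    then have "(\<exists>gs. is_S_sequencing G {b, a, c, d} gs) \<or> inverse_pair_exception G {b, a, c, d}"
      using assms by (intro sequencing4_or_exception_inverse_adjacent_prod_eq) auto
    then show ?thesis
      by (simp add: insert_commute)
  next
    case 3
    have "b \<otimes> c \<noteq> \<one>"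
      using carrier distinct b by (auto simp: m_eq_one_iff_right_eq_inv)
    moreover have "c \<otimes> d \<noteq> \<one>"
      using prod carrier b by (simp add: m_assoc[symmetric])
    moreover have "d \<otimes> a \<noteq> \<one>"
      using carrier distinct b by (auto simp: m_eq_one_iff_left_eq_inv)
    moreover have "b \<otimes> c \<otimes> d \<noteq> \<one>"
      using carrier 3 b m_eq_one_iff_right_eq_inv[of "inv a" "c \<otimes> d"] by (simp add: m_assoc)
    moreover have "c \<otimes> d \<otimes> a \<noteq> \<one>"
      using carrier 3 b m_eq_one_iff_left_eq_inv[of "c \<otimes> d" a] by simp
    moreover have "b \<otimes> c \<otimes> d \<otimes> a \<noteq> \<one>"
      using carrier b prod rotate4_eq_one[of a b c d] by simp
    ultimately have "\<exists>gs. is_S_sequencing G {a, b, c, d} gs"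
      using carrier nontrivial distinct b by (intro ex_S_sequencing4I[of b c d a]) auto
    then show ?thesis ..
  qed
qed

lemma sequencing4_or_exception_two_trivial_triples:
  assumes carrier: "a \<in> carrier G" "b \<in> carrier G" "c \<in> carrier G" "d \<in> carrier G"
    and nontrivial: "a \<noteq> \<one>" "b \<noteq> \<one>" "c \<noteq> \<one>" "d \<noteq> \<one>" and distinct: "distinct [a, b, c, d]"
    and ab: "a \<otimes> b \<noteq> \<one>" and bc: "b \<otimes> c \<noteq> \<one>" and cd: "c \<otimes> d \<noteq> \<one>"
    and abc: "a \<otimes> b \<otimes> c = \<one>" and cda: "c \<otimes> d \<otimes> a = \<one>"
  shows "(\<exists>gs. is_S_sequencing G {a, b, c, d} gs) \<or> inverse_pair_exception G {a, b, c, d}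
    \<or> four_triples_exception G {a, b, c, d}"
proof -
  have ac: "a \<otimes> c \<noteq> \<one>"
  proof
    assume "a \<otimes> c = \<one>"
    then have "a \<otimes> b \<otimes> inv a = \<one>"
      using abc carrier by (simp add: m_eq_one_iff_right_eq_inv)
    then show False
      using carrier nontrivial conj_eq_one_iff by simp
  qed
  have cd_inv: "c \<otimes> d = inv a"
    using cda carrier m_eq_one_iff_left_eq_inv by simp
  have acd: "a \<otimes> c \<otimes> d = \<one>"
    using cda carrier rotate3_eq_one[of a c d] rotate3_eq_one[of c d a] by simp
  consider "b \<otimes> d = \<one>" | "b \<otimes> d \<noteq> \<one>" "a \<otimes> d \<otimes> b \<noteq> \<one>"
    | "b \<otimes> d \<noteq> \<one>" "a \<otimes> d \<otimes> b = \<one>" "b \<otimes> d \<otimes> c \<noteq> \<one>"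
    | "a \<otimes> d \<otimes> b = \<one>" "b \<otimes> d \<otimes> c = \<one>"
    by blast
  then show ?thesis
  proof cases
    case 1
    have "b \<otimes> d \<otimes> a \<otimes> c = a \<otimes> c"
      using 1 carrier by simp
    then have "(\<exists>gs. is_S_sequencing G {b, d, a, c} gs) \<or> inverse_pair_exception G {b, d, a, c}"
      using assms ac 1 m_eq_one_iff_right_eq_inv
      by (intro sequencing4_or_exception_inverse_adjacent) auto
    then show ?thesis
      by (auto simp: insert_commute)
  next
    case 2
    have "d \<otimes> b \<noteq> \<one>" "b \<otimes> a \<noteq> \<one>"
      using 2 ab carrier m_eq_one_commute by auto
    moreover have "c \<otimes> d \<otimes> b \<noteq> \<one>"
      using cd_inv carrier distinct m_eq_one_iff_right_eq_inv[of "inv a" b] by auto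
    moreover have "d \<otimes> b \<otimes> a \<noteq> \<one>"
      using 2 carrier rotate3_eq_one[of a d b] by simp
    moreover have "c \<otimes> d \<otimes> b \<otimes> a \<noteq> \<one>"
      using cd_inv carrier nontrivial conj_eq_one_iff[of "inv a" b] by simp
    ultimately have "\<exists>gs. is_S_sequencing G {a, b, c, d} gs"
      using assms by (intro ex_S_sequencing4I[of c d b a]) auto
    then show ?thesis ..
  next
    case 3
    have "c \<otimes> b \<noteq> \<one>"
      using bc carrier m_eq_one_commute by auto
    moreover have "a \<otimes> c \<otimes> b \<noteq> \<one>"
    proof
      assume "a \<otimes> c \<otimes> b = \<one>"
      then have "c \<otimes> b = inv a" "d \<otimes> b = inv a"
        using 3 carrier m_eq_one_iff_right_eq_inv by (simp_all add: m_assoc)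
      then have "c \<otimes> b = d \<otimes> b"
        by simp
      then show False
        using carrier distinct by simp
    qed
    moreover have "c \<otimes> b \<otimes> d \<noteq> \<one>"
      using 3 carrier rotate3_eq_one[of b d c] rotate3_eq_one[of d c b] by simp
    moreover have "a \<otimes> c \<otimes> b \<otimes> d \<noteq> \<one>"
    proof -
      have "a \<otimes> c = inv d"
        using acd carrier m_eq_one_iff_left_eq_inv by simp
      then show ?thesis
        using carrier nontrivial conj_eq_one_iff[of "inv d" b] by simp
    qed
    ultimately have "\<exists>gs. is_S_sequencing G {a, b, c, d} gs"
      using assms ac 3 by (intro ex_S_sequencing4I[of a c b d]) auto
    then show ?thesis ..
  next
    case 4
    then have "four_triples_exception G {a, b, c, d}"
      unfolding four_triples_exception_def using carrier abc acd by blast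
    then show ?thesis by blast
  qed
qed

lemma sequencing4_or_exception_no_inverse_adjacent:
  assumes carrier: "a \<in> carrier G" "b \<in> carrier G" "c \<in> carrier G" "d \<in> carrier G"
    and nontrivial: "a \<noteq> \<one>" "b \<noteq> \<one>" "c \<noteq> \<one>" "d \<noteq> \<one>" and distinct: "distinct [a, b, c, d]"
    and prod: "a \<otimes> b \<otimes> c \<otimes> d \<noteq> \<one>"
    and pairs: "a \<otimes> b \<noteq> \<one>" "b \<otimes> c \<noteq> \<one>" "c \<otimes> d \<noteq> \<one>" "d \<otimes> a \<noteq> \<one>"
  shows "(\<exists>gs. is_S_sequencing G {a, b, c, d} gs) \<or> inverse_pair_exception G {a, b, c, d}
    \<or> four_triples_exception G {a, b, c, d}"
proof -
  have prod_rotations: "b \<otimes> c \<otimes> d \<otimes> a \<noteq> \<one>" "c \<otimes> d \<otimes> a \<otimes> b \<noteq> \<one>" "d \<otimes> a \<otimes> b \<otimes> c \<noteq> \<one>"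
    using prod carrier rotate4_eq_one[of a b c d] rotate4_eq_one[of b c d a] rotate4_eq_one[of c d a b]
    by simp_all
  note facts = assms prod_rotations
  consider "a \<otimes> b \<otimes> c \<noteq> \<one>" "b \<otimes> c \<otimes> d \<noteq> \<one>" | "b \<otimes> c \<otimes> d \<noteq> \<one>" "c \<otimes> d \<otimes> a \<noteq> \<one>"
    | "c \<otimes> d \<otimes> a \<noteq> \<one>" "d \<otimes> a \<otimes> b \<noteq> \<one>" | "d \<otimes> a \<otimes> b \<noteq> \<one>" "a \<otimes> b \<otimes> c \<noteq> \<one>"
    | "a \<otimes> b \<otimes> c = \<one>" "c \<otimes> d \<otimes> a = \<one>" | "b \<otimes> c \<otimes> d = \<one>" "d \<otimes> a \<otimes> b = \<one>"
    by blast
  then show ?thesis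
  proof cases
    case 1
    have "\<exists>gs. is_S_sequencing G {a, b, c, d} gs"
      by (rule ex_S_sequencing4I[of a b c d]) (use facts 1 in auto)
    then show ?thesis ..
  next
    case 2
    have "\<exists>gs. is_S_sequencing G {a, b, c, d} gs"
      by (rule ex_S_sequencing4I[of b c d a]) (use facts 2 in auto)
    then show ?thesis ..
  next
    case 3
    have "\<exists>gs. is_S_sequencing G {a, b, c, d} gs"
      by (rule ex_S_sequencing4I[of c d a b]) (use facts 3 in auto)
    then show ?thesis ..
  next
    case 4
    have "\<exists>gs. is_S_sequencing G {a, b, c, d} gs"
      by (rule ex_S_sequencing4I[of d a b c]) (use facts 4 in auto)
    then show ?thesis ..
  next
    case 5
    then show ?thesis
      by (rule sequencing4_or_exception_two_trivial_triples[OF carrier nontrivial distinct pairs(1-3)])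
  next
    case 6
    have "(\<exists>gs. is_S_sequencing G {b, c, d, a} gs) \<or> inverse_pair_exception G {b, c, d, a}
        \<or> four_triples_exception G {b, c, d, a}"
      by (rule sequencing4_or_exception_two_trivial_triples) (use facts 6 in auto)
    then show ?thesis
      by (simp add: insert_commute)
  qed
qed

lemma sequencing4_or_exception:
  assumes carrier: "a \<in> carrier G" "b \<in> carrier G" "c \<in> carrier G" "d \<in> carrier G"
    and nontrivial: "a \<noteq> \<one>" "b \<noteq> \<one>" "c \<noteq> \<one>" "d \<noteq> \<one>" and distinct: "distinct [a, b, c, d]"
    and prod: "a \<otimes> b \<otimes> c \<otimes> d \<noteq> \<one>"
  shows "(\<exists>gs. is_S_sequencing G {a, b, c, d} gs) \<or> inverse_pair_exception G {a, b, c, d}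
    \<or> four_triples_exception G {a, b, c, d}"
proof -
  have prod_rotations: "b \<otimes> c \<otimes> d \<otimes> a \<noteq> \<one>" "c \<otimes> d \<otimes> a \<otimes> b \<noteq> \<one>" "d \<otimes> a \<otimes> b \<otimes> c \<noteq> \<one>"
    using prod carrier rotate4_eq_one[of a b c d] rotate4_eq_one[of b c d a] rotate4_eq_one[of c d a b]
    by simp_all
  have rotations: "{b, c, d, a} = {a, b, c, d}" "{c, d, a, b} = {a, b, c, d}" "{d, a, b, c} = {a, b, c, d}"
    by auto
  note facts = assms prod_rotations
  consider "a \<otimes> b = \<one>" | "b \<otimes> c = \<one>" | "c \<otimes> d = \<one>" | "d \<otimes> a = \<one>"
    | "a \<otimes> b \<noteq> \<one>" "b \<otimes> c \<noteq> \<one>" "c \<otimes> d \<noteq> \<one>" "d \<otimes> a \<noteq> \<one>"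
    by blast
  then show ?thesis
  proof cases
    case 1
    have "(\<exists>gs. is_S_sequencing G {a, b, c, d} gs) \<or> inverse_pair_exception G {a, b, c, d}"
      by (rule sequencing4_or_exception_inverse_adjacent) (use facts 1 m_eq_one_iff_right_eq_inv[of a b] in auto)
    then show ?thesis by blast
  next
    case 2
    have "(\<exists>gs. is_S_sequencing G {b, c, d, a} gs) \<or> inverse_pair_exception G {b, c, d, a}"
      by (rule sequencing4_or_exception_inverse_adjacent) (use facts 2 m_eq_one_iff_right_eq_inv[of b c] in auto)
    then show ?thesis unfolding rotations by blast
  next
    case 3
    have "(\<exists>gs. is_S_sequencing G {c, d, a, b} gs) \<or> inverse_pair_exception G {c, d, a, b}"
      by (rule sequencing4_or_exception_inverse_adjacent) (use facts 3 m_eq_one_iff_right_eq_inv[of c d] in auto)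
    then show ?thesis unfolding rotations by blast
  next
    case 4
    have "(\<exists>gs. is_S_sequencing G {d, a, b, c} gs) \<or> inverse_pair_exception G {d, a, b, c}"
      by (rule sequencing4_or_exception_inverse_adjacent) (use facts 4 m_eq_one_iff_right_eq_inv[of d a] in auto)
    then show ?thesis unfolding rotations by blast
  next
    case 5
    then show ?thesis
      by (rule sequencing4_or_exception_no_inverse_adjacent[OF carrier nontrivial distinct prod])
  qed
qed

lemma ex_S_sequencing_or_exception:
  assumes ordering: "is_ordering S gs" and subset: "S \<subseteq> carrier G - {\<one>}"
    and "length gs \<le> 4" and prod: "list_prod G gs \<noteq> \<one>"
  shows "(\<exists>gs. is_S_sequencing G S gs)
    \<or> card S = 4 \<and> (inverse_pair_exception G S \<or> four_triples_exception G S)"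
proof -
  have distinct: "distinct gs" and set: "set gs = S"
    using ordering unfolding is_ordering_def by auto
  with subset have elements: "x \<in> carrier G" "x \<noteq> \<one>" if "x \<in> set gs" for x
    using that by auto
  from \<open>length gs \<le> 4\<close> consider "gs = []" | p where "gs = [p]" | p q where "gs = [p, q]"
    | p q r where "gs = [p, q, r]" | p q r s where "gs = [p, q, r, s]"
    by (auto simp: le_Suc_eq numeral_eq_Suc length_Suc_conv)
  then show ?thesis
  proof cases
    case 1
    with prod show ?thesis by (simp add: list_prod_def)
  next
    case (2 p)
    then show ?thesis
      using set elements by (intro disjI1 ex_S_sequencing1I) auto
  next
    case (3 p q)
    then show ?thesis
      using set elements distinct prod by (intro disjI1 ex_S_sequencing2I) (auto simp: list_prod_def)
  next
    case (4 p q r)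
    then show ?thesis
      using set elements distinct prod by (auto simp: list_prod_def intro!: ex_S_sequencing3)
  next
    case (5 a b c d)
    then have "card S = 4"
      using set distinct distinct_card by fastforce
    moreover have "a \<in> carrier G" "b \<in> carrier G" "c \<in> carrier G" "d \<in> carrier G"
      "a \<noteq> \<one>" "b \<noteq> \<one>" "c \<noteq> \<one>" "d \<noteq> \<one>"
      using elements unfolding 5 by auto
    ultimately show ?thesis
      using sequencing4_or_exception[of a b c d] 5 set distinct prod by (simp add: list_prod_def)
  qed
qed

end

theorem theorem2p1:
  fixes G (structure) and S :: "'a set"
  assumes "group G"
    and "finite (carrier G)"
    and "S \<subseteq> carrier G - {\<one>}"
    and "card S \<le> 4"
    and "\<exists>gs. is_ordering S gs \<and> list_prod G gs \<noteq> \<one>"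
    and "\<not> (card S = 4 \<and> (\<exists>x\<in>carrier G. \<exists>y\<in>carrier G. \<exists>z\<in>carrier G.
               S = {x, inv x, y, z} \<and> x \<otimes> y \<otimes> z = \<one> \<and> inv x \<otimes> z \<otimes> y = \<one>))"
    and "\<not> (card S = 4 \<and> (\<exists>w\<in>carrier G. \<exists>x\<in>carrier G. \<exists>y\<in>carrier G. \<exists>z\<in>carrier G.
               S = {w, x, y, z} \<and> w \<otimes> x \<otimes> y = \<one> \<and> w \<otimes> y \<otimes> z = \<one>
               \<and> w \<otimes> z \<otimes> x = \<one> \<and> x \<otimes> z \<otimes> y = \<one>))"
  shows "\<exists>gs. is_S_sequencing G S gs"
proof -
  interpret group G by fact
  obtain gs where ordering: "is_ordering S gs" and prod: "list_prod G gs \<noteq> \<one>"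
    using assms(5) by blast
  then have "length gs = card S"
    unfolding is_ordering_def by (metis distinct_card)
  then have "(\<exists>gs. is_S_sequencing G S gs)
      \<or> card S = 4 \<and> (inverse_pair_exception G S \<or> four_triples_exception G S)"
    using ex_S_sequencing_or_exception[OF ordering assms(3) _ prod] assms(4) by simp
  then show ?thesis
    using assms(6,7) unfolding inverse_pair_exception_def four_triples_exception_def by blast
qed

end
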